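(* Let $\Omega\subsetneq\mathbb{R}^{2n+1}$ be a nonempty open convex set (convex in the Euclidean sense; not necessarily bounded). For $\xi\in\Omega$ let $\hat\xi\in\partial\Omega$ be a point with $|\xi-\hat\xi|=\operatorname{dist}(\xi,\partial\Omega)$ and let $\nu(\xi)=(\hat\xi-\xi)/|\hat\xi-\xi|\in\mathbb{S}^{2n}$. Then for every $p\ge2$ and every $u\in C_0^\infty(\Omega)$, \[ \int_\Omega|\nabla_{\mathbb{H}^n}u|^p\,d\xi\ge\Bigl(\frac{p-1}{p}\Bigr)^p\int_\Omega\sum_{i=1}^n\frac{|\langle X_i(\xi),\nu(\xi)\rangle|^p+|\langle Y_i(\xi),\nu(\xi)\rangle|^p}{\operatorname{dist}(\xi,\partial\Omega)^p}|u|^p\,d\xi . \]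
   Context: $\mathbb{H}^n$ is $\mathbb{R}^{2n+1}$ with points $\xi=(x,y,t)$, $x,y\in\mathbb{R}^n$, $t\in\mathbb{R}$, and Lebesgue measure. For $1\le i\le n$, $X_i=\partial_{x_i}+2y_i\partial_t$, $Y_i=\partial_{y_i}-2x_i\partial_t$, identified with their coefficient vectors in $\mathbb{R}^{2n+1}$; $\langle\cdot,\cdot\rangle$ is the Euclidean inner product. $\nabla_{\mathbb{H}^n}u=(X_1u,\dots,X_nu,Y_1u,\dots,Y_nu)$ and $|\nabla_{\mathbb{H}^n}u|=\bigl(\sum_i(|X_iu|^2+|Y_iu|^2)\bigr)^{1/2}$. $\operatorname{dist}$ is Euclidean distance and $\mathbb{S}^{2n}$ the Euclidean unit sphere. Functions are real-valued. *)

theory Defs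
  imports "HOL-Analysis.Analysis"
begin

text \<open>Points of the Heisenberg group H^n = R^(2n+1), written (x, y, t) with
  x, y in R^n (index type 'n, n = CARD('n)) and t in R.\<close>
type_synonym 'n hpoint = "(real^'n) \<times> (real^'n) \<times> real"

text \<open>Coefficient vectors of the left-invariant fields
  X_i = d/dx_i + 2 y_i d/dt and Y_i = d/dy_i - 2 x_i d/dt.\<close>
definition hX :: "'n::finite \<Rightarrow> 'n hpoint \<Rightarrow> 'n hpoint" where
  "hX i p = (axis i 1, 0, 2 * (fst (snd p)) $ i)"

definition hY :: "'n::finite \<Rightarrow> 'n hpoint \<Rightarrow> 'n hpoint" where
  "hY i p = (0, axis i 1, - 2 * (fst p) $ i)"

definition hgrad_norm :: "('n::finite hpoint \<Rightarrow> real) \<Rightarrow> 'n hpoint \<Rightarrow> real" where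
  "hgrad_norm u p = sqrt (\<Sum>i\<in>UNIV. (frechet_derivative u (at p) (hX i p))\<^sup>2
                                   + (frechet_derivative u (at p) (hY i p))\<^sup>2)"

text \<open>C^infinity on the whole space: u belongs to a class of everywhere differentiable
  functions closed under taking directional derivatives.\<close>
definition smooth_fun :: "('a::euclidean_space \<Rightarrow> real) \<Rightarrow> bool" where
  "smooth_fun u \<longleftrightarrow> (\<exists>F. u \<in> F \<and> (\<forall>g\<in>F. (\<forall>x. g differentiable (at x)) \<and>
        (\<forall>v. (\<lambda>x. frechet_derivative g (at x) v) \<in> F)))"

text \<open>C_0^infinity(Omega), functions extended by zero outside Omega.\<close>
definition Cc_infty :: "'a::euclidean_space set \<Rightarrow> ('a \<Rightarrow> real) set" where
  "Cc_infty \<Omega> = {u. smooth_fun u \<and> compact (closure {x. u x \<noteq> 0})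
                     \<and> closure {x. u x \<noteq> 0} \<subseteq> \<Omega>}"

end

theory Submission
  imports Defs
begin

text \<open>Each field \<open>X\<^sub>i\<close>, \<open>Y\<^sub>i\<close> is constant along its own straight integral lines
  \<open>\<xi> + s X\<^sub>i(\<xi>)\<close>, and these lines are sheared translates of a coordinate direction, so
  Lebesgue measure disintegrates along them. On each line the one-dimensional Hardy
  inequality \<open>\<integral> \<bar>f'\<bar>\<^sup>p \<ge> ((p - 1) / p)\<^sup>p \<integral> \<bar>f\<bar>\<^sup>p / \<delta>\<^sup>p\<close> holds, where \<open>\<delta>\<close> is the distance to the
  complement of the (convex, hence interval) section of \<open>\<Omega>\<close>. Since \<open>\<Omega>\<close> lies in the
  half-space \<open>\<langle>\<eta> - \<xi>, \<nu>\<rangle> < dist \<xi> \<partial>\<Omega>\<close>, the line through \<open>\<xi>\<close> in direction \<open>X\<^sub>i\<close> leaves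
  \<open>\<Omega>\<close> within \<open>dist \<xi> \<partial>\<Omega> / \<bar>\<langle>X\<^sub>i, \<nu>\<rangle>\<bar>\<close>. Summing over \<open>i\<close> and using
  \<open>\<Sum> \<bar>a\<^sub>j\<bar> powr p \<le> (\<Sum> a\<^sub>j\<^sup>2) powr (p / 2)\<close> for \<open>p \<ge> 2\<close> gives the theorem.\<close>

definition slab :: "'a::euclidean_space \<Rightarrow> 'a set" where
  "slab b = {x. 0 \<le> x \<bullet> b \<and> x \<bullet> b \<le> 1}"

lemma slab_borel[measurable]: "slab b \<in> sets borel"
  unfolding slab_def by measurable

lemma nn_integral_lborel_translate:
  fixes g :: "'a::euclidean_space \<Rightarrow> ennreal"
  assumes [measurable]: "g \<in> borel_measurable borel"
  shows "(\<integral>\<^sup>+x. g (x + v) \<partial>lborel) = (\<integral>\<^sup>+x. g x \<partial>lborel)"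
proof -
  have "(\<integral>\<^sup>+x. g x \<partial>lborel) = (\<integral>\<^sup>+x. g x \<partial>distr lborel borel ((+) v))"
    by (simp add: lborel_distr_plus)
  also have "\<dots> = (\<integral>\<^sup>+x. g (v + x) \<partial>lborel)"
    by (subst nn_integral_distr) auto
  finally show ?thesis by (simp add: add.commute)
qed

lemma nn_integral_slab_preimage_line:
  fixes b :: "'a::euclidean_space"
  assumes "b \<bullet> b = 1"
  shows "(\<integral>\<^sup>+s. indicator (slab b) (x - s *\<^sub>R b) \<partial>lborel) = 1"
proof -
  have "(\<integral>\<^sup>+s. indicator (slab b) (x - s *\<^sub>R b) \<partial>lborel)
      = (\<integral>\<^sup>+s. indicator {x \<bullet> b - 1..x \<bullet> b} s \<partial>lborel)"
    using assms by (intro nn_integral_cong) (auto simp: slab_def indicator_def inner_diff_left)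
  then show ?thesis by simp
qed

text \<open>Integrating over the lines \<open>s \<mapsto> \<Phi> s x\<close> issued from the slab \<open>0 \<le> x \<bullet> b \<le> 1\<close>
  covers each point exactly once on average: after Fubini and the measure-preserving change
  of variables \<open>\<Phi> s\<close>, every point is weighted by the unit length of \<open>{s. 0 \<le> x \<bullet> b - s \<le> 1}\<close>.\<close>
lemma nn_integral_lborel_lines:
  fixes h :: "'a::euclidean_space \<Rightarrow> ennreal" and \<Phi> :: "real \<Rightarrow> 'a \<Rightarrow> 'a"
  assumes [measurable]: "h \<in> borel_measurable borel" "(\<lambda>(x, s). \<Phi> s x) \<in> borel_measurable (borel \<Otimes>\<^sub>M borel)"
    and bb: "b \<bullet> b = 1" and along: "\<And>s x. \<Phi> s x \<bullet> b = x \<bullet> b + s"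
    and preserving: "\<And>s g. g \<in> borel_measurable borel \<Longrightarrow>
                        (\<integral>\<^sup>+x. g (\<Phi> s x) \<partial>lborel) = (\<integral>\<^sup>+x. g x \<partial>lborel)"
  shows "(\<integral>\<^sup>+x. h x \<partial>lborel) = (\<integral>\<^sup>+x. indicator (slab b) x * (\<integral>\<^sup>+s. h (\<Phi> s x) \<partial>lborel) \<partial>lborel)"
proof -
  have slab_shift: "indicator (slab b) x = indicator (slab b) (\<Phi> s x - s *\<^sub>R b)" for s :: real and x :: 'a
    by (simp add: slab_def indicator_def inner_diff_left along bb)
  have [measurable]: "(\<lambda>s. \<Phi> s x) \<in> borel_measurable borel" for x
  proof -
    have "(\<lambda>s. case (x, s) of (x, s) \<Rightarrow> \<Phi> s x) \<in> borel_measurable borel" by measurable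
    then show ?thesis by simp
  qed
  have "(\<integral>\<^sup>+x. indicator (slab b) x * (\<integral>\<^sup>+s. h (\<Phi> s x) \<partial>lborel) \<partial>lborel)
      = (\<integral>\<^sup>+x. (\<integral>\<^sup>+s. indicator (slab b) x * h (\<Phi> s x) \<partial>lborel) \<partial>lborel)"
    by (intro nn_integral_cong nn_integral_cmult[symmetric]) measurable
  also have "\<dots> = (\<integral>\<^sup>+s. (\<integral>\<^sup>+x. indicator (slab b) x * h (\<Phi> s x) \<partial>lborel) \<partial>lborel)"
    by (rule lborel_pair.Fubini'[symmetric]) measurable
  also have "\<dots> = (\<integral>\<^sup>+s. (\<integral>\<^sup>+x. indicator (slab b) (\<Phi> s x - s *\<^sub>R b) * h (\<Phi> s x) \<partial>lborel) \<partial>lborel)"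
    by (simp only: slab_shift[symmetric])
  also have "\<dots> = (\<integral>\<^sup>+s. (\<integral>\<^sup>+x. indicator (slab b) (x - s *\<^sub>R b) * h x \<partial>lborel) \<partial>lborel)"
    by (intro nn_integral_cong preserving) measurable
  also have "\<dots> = (\<integral>\<^sup>+x. (\<integral>\<^sup>+s. indicator (slab b) (x - s *\<^sub>R b) * h x \<partial>lborel) \<partial>lborel)"
    by (rule lborel_pair.Fubini') measurable
  also have "\<dots> = (\<integral>\<^sup>+x. h x \<partial>lborel)"
    by (simp add: nn_integral_multc nn_integral_slab_preimage_line[OF bb])
  finally show ?thesis ..
qed

lemma nn_integral_lborel_parallel_lines:
  fixes h :: "'a::euclidean_space \<Rightarrow> ennreal"
  assumes [measurable]: "h \<in> borel_measurable borel" and bb: "b \<bullet> b = 1"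
  shows "(\<integral>\<^sup>+x. h x \<partial>lborel) = (\<integral>\<^sup>+x. indicator (slab b) x * (\<integral>\<^sup>+s. h (x + s *\<^sub>R b) \<partial>lborel) \<partial>lborel)"
proof (rule nn_integral_lborel_lines[OF _ _ bb])
  show "(\<lambda>(x, s). x + s *\<^sub>R b) \<in> borel_measurable (borel \<Otimes>\<^sub>M borel)" by measurable
  show "(x + s *\<^sub>R b) \<bullet> b = x \<bullet> b + s" for s x by (simp add: inner_add_left bb)
qed (simp_all add: nn_integral_lborel_translate)

lemma nn_integral_lborel_shear:
  fixes G :: "'a::euclidean_space \<Rightarrow> ennreal" and c :: 'a
  assumes [measurable]: "G \<in> borel_measurable borel" "\<beta> \<in> borel_measurable borel"
    and cc: "c \<bullet> c = 1" and invariant: "\<And>x t. \<beta> (x + t *\<^sub>R c) = \<beta> x"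
  shows "(\<integral>\<^sup>+x. G (x + \<beta> x *\<^sub>R c) \<partial>lborel) = (\<integral>\<^sup>+x. G x \<partial>lborel)"
proof -
  have line: "(\<integral>\<^sup>+t. G ((x + t *\<^sub>R c) + \<beta> (x + t *\<^sub>R c) *\<^sub>R c) \<partial>lborel)
      = (\<integral>\<^sup>+t. G (x + t *\<^sub>R c) \<partial>lborel)" for x
  proof -
    have "(\<integral>\<^sup>+t. G ((x + t *\<^sub>R c) + \<beta> (x + t *\<^sub>R c) *\<^sub>R c) \<partial>lborel)
        = (\<integral>\<^sup>+t. G (x + (\<beta> x + 1 * t) *\<^sub>R c) \<partial>lborel)"
      by (intro nn_integral_cong) (simp add: invariant algebra_simps)
    then show ?thesis
      using nn_integral_real_affine[of "\<lambda>t. G (x + t *\<^sub>R c)" 1 "\<beta> x"] by simp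
  qed
  have "(\<integral>\<^sup>+x. G (x + \<beta> x *\<^sub>R c) \<partial>lborel)
      = (\<integral>\<^sup>+x. indicator (slab c) x * (\<integral>\<^sup>+t. G (x + t *\<^sub>R c) \<partial>lborel) \<partial>lborel)"
    unfolding line[symmetric] by (rule nn_integral_lborel_parallel_lines[OF _ cc]) measurable
  also have "\<dots> = (\<integral>\<^sup>+x. G x \<partial>lborel)"
    by (rule nn_integral_lborel_parallel_lines[symmetric, OF _ cc]) measurable
  finally show ?thesis .
qed

lemma nn_integral_lborel_sheared_lines:
  fixes h :: "'a::euclidean_space \<Rightarrow> ennreal" and b c e :: 'a
  assumes [measurable]: "h \<in> borel_measurable borel"
    and bb: "b \<bullet> b = 1" and cc: "c \<bullet> c = 1"
    and bc: "b \<bullet> c = 0" and be: "b \<bullet> e = 0" and ce: "c \<bullet> e = 0"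
  shows "(\<integral>\<^sup>+x. h x \<partial>lborel) =
     (\<integral>\<^sup>+x. indicator (slab b) x * (\<integral>\<^sup>+s. h (x + s *\<^sub>R (b + (\<alpha> * (x \<bullet> e)) *\<^sub>R c)) \<partial>lborel) \<partial>lborel)"
proof (rule nn_integral_lborel_lines[OF _ _ bb])
  fix s :: real and g :: "'a \<Rightarrow> ennreal"
  assume [measurable]: "g \<in> borel_measurable borel"
  have "(\<integral>\<^sup>+x. g (x + s *\<^sub>R (b + (\<alpha> * (x \<bullet> e)) *\<^sub>R c)) \<partial>lborel)
      = (\<integral>\<^sup>+x. g ((x + s *\<^sub>R b) + (s * \<alpha> * ((x + s *\<^sub>R b) \<bullet> e)) *\<^sub>R c) \<partial>lborel)"
    by (intro nn_integral_cong) (simp add: algebra_simps inner_add_left be)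
  also have "\<dots> = (\<integral>\<^sup>+y. g (y + (s * \<alpha> * (y \<bullet> e)) *\<^sub>R c) \<partial>lborel)"
    by (rule nn_integral_lborel_translate[of "\<lambda>y. g (y + (s * \<alpha> * (y \<bullet> e)) *\<^sub>R c)"]) measurable
  also have "\<dots> = (\<integral>\<^sup>+y. g y \<partial>lborel)"
    by (rule nn_integral_lborel_shear[OF _ _ cc]) (simp_all add: inner_add_left ce)
  finally show "(\<integral>\<^sup>+x. g (x + s *\<^sub>R (b + (\<alpha> * (x \<bullet> e)) *\<^sub>R c)) \<partial>lborel) = (\<integral>\<^sup>+y. g y \<partial>lborel)" .
next
  show "(x + s *\<^sub>R (b + (\<alpha> * (x \<bullet> e)) *\<^sub>R c)) \<bullet> b = x \<bullet> b + s" for s x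
    by (simp add: inner_add_left bb inner_commute[of c b] bc)
qed simp_all

lemma has_real_derivative_abs_powr:
  fixes p x :: real
  assumes p: "p > 1"
  shows "((\<lambda>x. \<bar>x\<bar> powr p) has_real_derivative (p * \<bar>x\<bar> powr (p - 1) * sgn x)) (at x)"
proof (cases "x = 0")
  case True
  have "((\<lambda>y. (\<bar>y\<bar> powr p - \<bar>0\<bar> powr p) / (y - 0)) \<longlongrightarrow> 0) (at (0::real))"
  proof (rule Lim_null_comparison)
    show "\<forall>\<^sub>F y in at 0. norm ((\<bar>y\<bar> powr p - \<bar>0\<bar> powr p) / (y - 0)) \<le> \<bar>y\<bar> powr (p - 1)"
      by (rule eventually_at_filter[THEN iffD2], rule always_eventually)
         (simp add: powr_diff abs_divide)
    show "((\<lambda>y. \<bar>y\<bar> powr (p - 1)) \<longlongrightarrow> 0) (at (0::real))"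
      using p by (intro tendsto_zero_powrI) (auto intro!: tendsto_eq_intros)
  qed
  then show ?thesis using True by (simp add: has_field_derivative_iff)
next
  case False
  then consider "x > 0" | "x < 0" by linarith
  then show ?thesis
  proof cases
    case pos: 1
    have ev: "\<forall>\<^sub>F y in nhds x. \<bar>y\<bar> powr p = y powr p"
      using eventually_nhds_in_open[of "{0<..}" x] pos by (auto elim!: eventually_mono)
    have "((\<lambda>y. y powr p) has_real_derivative p * x powr (p - 1)) (at x)"
      using pos by (intro has_real_derivative_powr) simp
    then show ?thesis using DERIV_cong_ev[OF refl ev refl] pos by simp
  next
    case neg: 2
    have ev: "\<forall>\<^sub>F y in nhds x. \<bar>y\<bar> powr p = (- y) powr p"
      using eventually_nhds_in_open[of "{..<0}" x] neg by (auto elim!: eventually_mono)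
    have "((\<lambda>y. (- y) powr p) has_real_derivative p * (- x) powr (p - 1) * (- 1)) (at x)"
      using neg by (auto intro!: derivative_eq_intros)
    then show ?thesis using DERIV_cong_ev[OF refl ev refl] neg by simp
  qed
qed

text \<open>With \<open>G(s) = k \<bar>f s\<bar> powr p * (s - a) powr (1 - p)\<close>, the left-hand side is
  \<open>G' + c \<bar>f\<bar> powr p / (s - a) powr p\<close>; Young's inequality bounds the cross term, and \<open>k\<close> is
  chosen so that the remaining \<open>\<bar>f\<bar> powr p\<close>-terms cancel exactly when \<open>c = ((p - 1) / p) powr p\<close>.\<close>
lemma hardy_young_ineq:
  fixes p x y t :: real
  assumes p: "p > 1" and x: "x \<ge> 0" and t: "t > 0"
  defines "k \<equiv> ((p - 1) / p) powr (p - 1)" and "c \<equiv> ((p - 1) / p) powr p"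
  shows "p * x powr (p - 1) * y * (k * t powr (1 - p)) + x powr p * (k * (1 - p) * t powr (- p))
           + c * (x powr p / t powr p) \<le> \<bar>y\<bar> powr p"
proof -
  define q where "q = p / (p - 1)"
  have q: "q > 1" and pq: "1 / p + 1 / q = 1" and p_div_q: "p / q = p - 1"
    using p by (auto simp: q_def field_simps)
  define B where "B = x powr (p - 1) * (k * t powr (1 - p))"
  have B0: "B \<ge> 0" using x t by (simp add: B_def k_def)
  have Bq: "B powr q = x powr p * c * t powr (- p)"
  proof -
    have e1: "(p - 1) * q = p" and e2: "(1 - p) * q = - p" using p by (auto simp: q_def field_simps)
    have "B powr q = (x powr (p - 1)) powr q * (k powr q * (t powr (1 - p)) powr q)"
      unfolding B_def using x t by (simp add: powr_mult k_def)
    then show ?thesis unfolding k_def c_def by (simp add: powr_powr e1 e2)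
  qed
  have pc: "p * c = (p - 1) * k"
  proof -
    have "c = ((p - 1) / p) powr 1 * k" unfolding c_def k_def
      using powr_add[of "(p - 1) / p" 1 "p - 1"] by simp
    then show ?thesis using p by simp
  qed
  have "p * x powr (p - 1) * y * (k * t powr (1 - p)) = p * (y * B)" by (simp add: B_def)
  also have "\<dots> \<le> p * (\<bar>y\<bar> * B)"
    using p B0 by (intro mult_left_mono mult_right_mono) auto
  also have "\<dots> \<le> p * (\<bar>y\<bar> powr p / p + B powr q / q)"
    using Youngs_inequality[OF p q pq, of "\<bar>y\<bar>" B] B0 p by (intro mult_left_mono) auto
  also have "\<dots> = \<bar>y\<bar> powr p + (p / q) * B powr q"
    using p by (simp add: field_simps)
  also have "\<dots> = \<bar>y\<bar> powr p + (p - 1) * (x powr p * c * t powr (- p))"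
    by (simp only: p_div_q Bq)
  finally have "p * x powr (p - 1) * y * (k * t powr (1 - p))
      \<le> \<bar>y\<bar> powr p + (p - 1) * (x powr p * c * t powr (- p))" .
  moreover have "(p - 1) * (x powr p * c * t powr (- p)) + x powr p * (k * (1 - p) * t powr (- p))
      + c * (x powr p / t powr p) = 0"
  proof -
    have "(p - 1) * (x powr p * c * t powr (- p)) + x powr p * (k * (1 - p) * t powr (- p))
        + c * (x powr p * t powr (- p)) = x powr p * t powr (- p) * (p * c - (p - 1) * k)"
      by (simp add: algebra_simps)
    then show ?thesis using pc by (simp add: powr_minus_divide)
  qed
  ultimately show ?thesis by linarith
qed

lemma hardy_interval_left:
  fixes f f' :: "real \<Rightarrow> real"
  assumes p: "p > 1" and a: "a < \<alpha>" and \<alpha>m: "\<alpha> \<le> m"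
    and f': "\<And>s. (f has_real_derivative f' s) (at s)" and cont: "continuous_on {\<alpha>..m} f'"
    and zero: "f \<alpha> = 0"
  shows "((p - 1) / p) powr p * integral {\<alpha>..m} (\<lambda>s. \<bar>f s\<bar> powr p / (s - a) powr p)
           \<le> integral {\<alpha>..m} (\<lambda>s. \<bar>f' s\<bar> powr p)"
proof -
  define k where "k = ((p - 1) / p) powr (p - 1)"
  define c where "c = ((p - 1) / p) powr p"
  define G where "G s = \<bar>f s\<bar> powr p * (k * (s - a) powr (1 - p))" for s
  define G' where "G' s = p * \<bar>f s\<bar> powr (p - 1) * (sgn (f s) * f' s) * (k * (s - a) powr (1 - p))
      + \<bar>f s\<bar> powr p * (k * (1 - p) * (s - a) powr (- p))" for s
  have f_cont: "continuous_on {\<alpha>..m} f"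
    using f' by (intro continuous_at_imp_continuous_on ballI DERIV_isCont) auto
  have G': "(G has_real_derivative G' s) (at s)" if "s \<in> {\<alpha>..m}" for s
  proof -
    have sa: "s - a > 0" using that a by auto
    have "((\<lambda>s. \<bar>f s\<bar> powr p) has_real_derivative (p * \<bar>f s\<bar> powr (p - 1) * sgn (f s)) * f' s) (at s)"
      by (rule DERIV_chain2[OF has_real_derivative_abs_powr[OF p] f'])
    moreover have "((\<lambda>s. k * (s - a) powr (1 - p)) has_real_derivative k * ((1 - p) * (s - a) powr (- p))) (at s)"
      using sa by (auto intro!: derivative_eq_intros)
    ultimately show ?thesis
      unfolding G_def G'_def by (auto dest: DERIV_mult simp: algebra_simps)
  qed
  have "(G' has_integral (G m - G \<alpha>)) {\<alpha>..m}"
    by (rule fundamental_theorem_of_calculus[OF \<alpha>m])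
       (auto intro!: DERIV_subset[OF G'] simp: has_real_derivative_iff_has_vector_derivative[symmetric])
  moreover have "((\<lambda>s. \<bar>f' s\<bar> powr p - c * (\<bar>f s\<bar> powr p / (s - a) powr p)) has_integral
      integral {\<alpha>..m} (\<lambda>s. \<bar>f' s\<bar> powr p) - c * integral {\<alpha>..m} (\<lambda>s. \<bar>f s\<bar> powr p / (s - a) powr p)) {\<alpha>..m}"
    using p a
    by (intro has_integral_diff has_integral_mult_right integrable_integral integrable_continuous_interval
        continuous_on_powr' continuous_intros cont f_cont) auto
  moreover have "G' s \<le> \<bar>f' s\<bar> powr p - c * (\<bar>f s\<bar> powr p / (s - a) powr p)" if "s \<in> {\<alpha>..m}" for s
  proof -
    have "G' s + c * (\<bar>f s\<bar> powr p / (s - a) powr p) \<le> \<bar>sgn (f s) * f' s\<bar> powr p"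
      unfolding G'_def using hardy_young_ineq[OF p _, of "\<bar>f s\<bar>" "s - a" "sgn (f s) * f' s"] that a
      by (simp add: k_def c_def)
    also have "\<dots> \<le> \<bar>f' s\<bar> powr p"
      using p by (intro powr_mono2) (auto simp: abs_mult sgn_if)
    finally show ?thesis by simp
  qed
  ultimately have "G m - G \<alpha> \<le> integral {\<alpha>..m} (\<lambda>s. \<bar>f' s\<bar> powr p)
      - c * integral {\<alpha>..m} (\<lambda>s. \<bar>f s\<bar> powr p / (s - a) powr p)"
    by (rule has_integral_le)
  moreover have "G \<alpha> = 0" using zero p by (simp add: G_def)
  moreover have "G m \<ge> 0" using \<alpha>m a by (simp add: G_def k_def)
  ultimately show ?thesis unfolding c_def by simp
qed

lemma hardy_interval_right:
  fixes f f' :: "real \<Rightarrow> real"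
  assumes p: "p > 1" and b: "\<beta> < b" and m\<beta>: "m \<le> \<beta>"
    and f': "\<And>s. (f has_real_derivative f' s) (at s)" and cont: "continuous_on {m..\<beta>} f'"
    and zero: "f \<beta> = 0"
  shows "((p - 1) / p) powr p * integral {m..\<beta>} (\<lambda>s. \<bar>f s\<bar> powr p / (b - s) powr p)
           \<le> integral {m..\<beta>} (\<lambda>s. \<bar>f' s\<bar> powr p)"
proof -
  have "((\<lambda>s. f (- s)) has_real_derivative - f' (- s)) (at s)" for s
    using DERIV_chain2[OF f' DERIV_minus[OF DERIV_ident]] by simp
  moreover have "continuous_on {- \<beta>..- m} (\<lambda>s. - f' (- s))"
    by (intro continuous_intros continuous_on_compose2[OF cont]) auto
  ultimately have "((p - 1) / p) powr p * integral {- \<beta>..- m} (\<lambda>s. \<bar>f (- s)\<bar> powr p / (s - (- b)) powr p)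
      \<le> integral {- \<beta>..- m} (\<lambda>s. \<bar>- f' (- s)\<bar> powr p)"
    using b m\<beta> zero by (intro hardy_interval_left[OF p]) auto
  then show ?thesis
    using Henstock_Kurzweil_Integration.integral_reflect_real[of \<beta> m "\<lambda>s. \<bar>f s\<bar> powr p / (b - s) powr p"]
      Henstock_Kurzweil_Integration.integral_reflect_real[of \<beta> m "\<lambda>s. \<bar>f' s\<bar> powr p"]
    by (simp add: add.commute)
qed

lemma nn_integral_interval_continuous:
  fixes g :: "real \<Rightarrow> real"
  assumes "continuous_on {a..b} g" and "\<And>s. s \<in> {a..b} \<Longrightarrow> 0 \<le> g s"
  shows "(\<integral>\<^sup>+s. ennreal (g s) * indicator {a..b} s \<partial>lborel) = ennreal (integral {a..b} g)"
  using assms by (intro nn_integral_has_integral_lebesgue' integrable_integral integrable_continuous_interval)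

lemma borel_measurable_continuous_on_interval:
  fixes g :: "real \<Rightarrow> real"
  assumes "continuous_on {a..b} g"
  shows "(\<lambda>s. ennreal (g s) * indicator {a..b} s) \<in> borel_measurable borel"
proof -
  have "(\<lambda>s. ennreal (g s) * indicator {a..b} s) = (\<lambda>s. ennreal (indicator {a..b} s *\<^sub>R g s))"
    by (auto simp: fun_eq_iff split: split_indicator)
  then show ?thesis
    using measurable_compose[OF borel_measurable_continuous_on_indicator[OF _ assms] measurable_ennreal]
    by simp
qed

lemma hardy_interval:
  fixes f f' :: "real \<Rightarrow> real" and w :: "real \<Rightarrow> ennreal"
  assumes p: "p > 1" and a: "a < \<alpha>" and \<alpha>m: "\<alpha> \<le> m" and m\<beta>: "m \<le> \<beta>" and b: "\<beta> < b"
    and f': "\<And>s. (f has_real_derivative f' s) (at s)" and cont: "continuous_on UNIV f'"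
    and zero: "f \<alpha> = 0" "f \<beta> = 0"
    and w: "\<And>s. s \<in> {\<alpha>..\<beta>} \<Longrightarrow> w s \<le> ennreal (\<bar>f s\<bar> powr p / (s - a) powr p) * indicator {\<alpha>..m} s
                                       + ennreal (\<bar>f s\<bar> powr p / (b - s) powr p) * indicator {m..\<beta>} s"
  shows "ennreal (((p - 1) / p) powr p) * (\<integral>\<^sup>+s. w s * indicator {\<alpha>..\<beta>} s \<partial>lborel)
          \<le> (\<integral>\<^sup>+s. ennreal (\<bar>f' s\<bar> powr p) * indicator {\<alpha>..\<beta>} s \<partial>lborel)"
proof -
  define c where "c = ((p - 1) / p) powr p"
  define L where "L = (\<lambda>s. \<bar>f s\<bar> powr p / (s - a) powr p)"
  define R where "R = (\<lambda>s. \<bar>f s\<bar> powr p / (b - s) powr p)"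
  define D where "D = (\<lambda>s. \<bar>f' s\<bar> powr p)"
  have f_cont: "continuous_on UNIV f"
    using f' by (intro continuous_at_imp_continuous_on ballI DERIV_isCont) auto
  have L: "continuous_on {\<alpha>..m} L"
    unfolding L_def using p a
    by (intro continuous_on_powr' continuous_intros continuous_on_subset[OF f_cont]) auto
  have R: "continuous_on {m..\<beta>} R"
    unfolding R_def using p b
    by (intro continuous_on_powr' continuous_intros continuous_on_subset[OF f_cont]) auto
  have D: "continuous_on UNIV D"
    unfolding D_def using p by (intro continuous_on_powr' continuous_intros cont) auto
  have nonneg: "0 \<le> L s" "0 \<le> R s" "0 \<le> D s" "0 \<le> c" for s
    by (auto simp: L_def R_def D_def c_def)
  have int_nonneg: "0 \<le> integral {\<alpha>..m} L" "0 \<le> integral {m..\<beta>} R"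
    using L R by (auto intro!: integral_nonneg integrable_continuous_interval simp: nonneg)
  have "(\<integral>\<^sup>+s. w s * indicator {\<alpha>..\<beta>} s \<partial>lborel)
      \<le> (\<integral>\<^sup>+s. ennreal (L s) * indicator {\<alpha>..m} s + ennreal (R s) * indicator {m..\<beta>} s \<partial>lborel)"
    by (intro nn_integral_mono) (auto simp: L_def R_def w split: split_indicator)
  also have "\<dots> = ennreal (integral {\<alpha>..m} L) + ennreal (integral {m..\<beta>} R)"
    using borel_measurable_continuous_on_interval[OF L] borel_measurable_continuous_on_interval[OF R] nonneg
    by (subst nn_integral_add) (simp_all add: nn_integral_interval_continuous[OF L]
        nn_integral_interval_continuous[OF R])
  also have "\<dots> = ennreal (integral {\<alpha>..m} L + integral {m..\<beta>} R)"
    using int_nonneg by simp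
  finally have "ennreal c * (\<integral>\<^sup>+s. w s * indicator {\<alpha>..\<beta>} s \<partial>lborel)
      \<le> ennreal (c * (integral {\<alpha>..m} L + integral {m..\<beta>} R))"
    using int_nonneg nonneg(4) by (simp add: ennreal_mult mult_left_mono)
  also have "\<dots> \<le> ennreal (integral {\<alpha>..m} D + integral {m..\<beta>} D)"
    using hardy_interval_left[OF p a \<alpha>m f' continuous_on_subset[OF cont] zero(1)]
      hardy_interval_right[OF p b m\<beta> f' continuous_on_subset[OF cont] zero(2)]
    unfolding L_def R_def D_def c_def by (intro ennreal_leI) (simp add: distrib_left)
  also have "\<dots> = ennreal (integral {\<alpha>..\<beta>} D)"
    using Henstock_Kurzweil_Integration.integral_combine[OF \<alpha>m m\<beta>
        integrable_continuous_interval[OF continuous_on_subset[OF D subset_UNIV]]] by simp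
  also have "\<dots> = (\<integral>\<^sup>+s. ennreal (\<bar>f' s\<bar> powr p) * indicator {\<alpha>..\<beta>} s \<partial>lborel)"
    using D by (subst nn_integral_interval_continuous) (auto simp: D_def intro: continuous_on_subset)
  finally show ?thesis unfolding c_def .
qed

lemma compact_in_open_convex_gap:
  fixes U S :: "real set"
  assumes "open U" and "convex U" and "compact S" and "S \<subseteq> U" and "S \<noteq> {}"
  obtains a \<alpha> \<beta> b where "a < \<alpha>" "\<alpha> \<le> \<beta>" "\<beta> < b" "S \<subseteq> {\<alpha><..<\<beta>}"
    "\<And>r. r \<notin> U \<Longrightarrow> r \<le> a \<or> b \<le> r"
proof -
  define s1 where "s1 = Inf S"
  define s2 where "s2 = Sup S"
  have bdd: "bdd_below S" "bdd_above S"
    using \<open>compact S\<close> by (auto intro: bounded_imp_bdd_below bounded_imp_bdd_above compact_imp_bounded)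
  have "s1 \<in> S" "s2 \<in> S"
    unfolding s1_def s2_def using assms bdd
    by (auto intro: closed_contains_Inf closed_contains_Sup compact_imp_closed)
  moreover have S: "S \<subseteq> {s1..s2}"
    unfolding s1_def s2_def using bdd by (auto intro: cInf_lower cSup_upper)
  ultimately have "s1 \<in> U" "s2 \<in> U" "s1 \<le> s2" using assms by auto
  obtain e where e: "e > 0" "ball s1 e \<subseteq> U" "ball s2 e \<subseteq> U"
  proof -
    obtain e1 e2 where "e1 > 0" "ball s1 e1 \<subseteq> U" "e2 > 0" "ball s2 e2 \<subseteq> U"
      using \<open>open U\<close> \<open>s1 \<in> U\<close> \<open>s2 \<in> U\<close> by (meson open_contains_ball)
    then show thesis by (intro that[of "min e1 e2"]) auto
  qed
  have "{s1..s2} \<subseteq> U"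
    using closed_segment_subset[OF \<open>s1 \<in> U\<close> \<open>s2 \<in> U\<close> \<open>convex U\<close>] \<open>s1 \<le> s2\<close>
    by (simp add: closed_segment_eq_real_ivl)
  then have "r \<le> s1 - e \<or> s2 + e \<le> r" if "r \<notin> U" for r
  proof -
    have "r \<notin> {s1..s2}" "r \<notin> ball s1 e" "r \<notin> ball s2 e"
      using that e \<open>{s1..s2} \<subseteq> U\<close> by auto
    then show ?thesis by (auto simp: dist_real_def)
  qed
  moreover have "S \<subseteq> {s1 - e/2<..<s2 + e/2}" using S e by auto
  ultimately show thesis using e \<open>s1 \<le> s2\<close> by (intro that[of "s1 - e" "s1 - e/2" "s2 + e/2" "s2 + e"]) auto
qed

lemma hardy_line:
  fixes f f' :: "real \<Rightarrow> real" and w :: "real \<Rightarrow> ennreal" and U S :: "real set"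
  assumes p: "p > 1"
    and f': "\<And>s. (f has_real_derivative f' s) (at s)" and cont: "continuous_on UNIV f'"
    and U: "open U" "convex U" and S: "compact S" "S \<subseteq> U" and supp: "\<And>s. s \<notin> S \<Longrightarrow> f s = 0"
    and w: "\<And>s t. 0 < t \<Longrightarrow> (\<And>r. s + r \<notin> U \<Longrightarrow> t \<le> \<bar>r\<bar>) \<Longrightarrow> w s \<le> ennreal (t powr (- p))"
  shows "ennreal (((p - 1) / p) powr p) * (\<integral>\<^sup>+s. w s * ennreal (\<bar>f s\<bar> powr p) \<partial>lborel)
          \<le> (\<integral>\<^sup>+s. ennreal (\<bar>f' s\<bar> powr p) \<partial>lborel)"
proof (cases "S = {}")
  case True
  then show ?thesis using supp by simp
next
  case False
  obtain a \<alpha> \<beta> b where ab: "a < \<alpha>" "\<alpha> \<le> \<beta>" "\<beta> < b" and S_in: "S \<subseteq> {\<alpha><..<\<beta>}"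
    and gap: "\<And>r. r \<notin> U \<Longrightarrow> r \<le> a \<or> b \<le> r"
    using compact_in_open_convex_gap[OF U S False] by blast
  define m where "m = max \<alpha> (min \<beta> ((a + b) / 2))"
  have m: "\<alpha> \<le> m" "m \<le> \<beta>" using ab by (auto simp: m_def)
  have "\<alpha> \<notin> S" "\<beta> \<notin> S" using S_in by auto
  then have zero: "f \<alpha> = 0" "f \<beta> = 0" using supp by auto
  have bound: "w s * ennreal (\<bar>f s\<bar> powr p) \<le> ennreal (\<bar>f s\<bar> powr p / t powr p)"
    if "0 < t" "\<And>r. s + r \<notin> U \<Longrightarrow> t \<le> \<bar>r\<bar>" for s t
  proof -
    have "w s * ennreal (\<bar>f s\<bar> powr p) \<le> ennreal (t powr (- p)) * ennreal (\<bar>f s\<bar> powr p)"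
      using w[of t s] that by (intro mult_right_mono) auto
    then show ?thesis by (simp add: ennreal_mult[symmetric] powr_minus_divide)
  qed
  \<comment> \<open>On \<open>{\<alpha>..m}\<close> the nearest point outside \<open>U\<close> is at least \<open>s - a\<close> away, on \<open>{m..\<beta>}\<close> at least \<open>b - s\<close>.\<close>
  have split: "w s * ennreal (\<bar>f s\<bar> powr p) \<le> ennreal (\<bar>f s\<bar> powr p / (s - a) powr p) * indicator {\<alpha>..m} s
          + ennreal (\<bar>f s\<bar> powr p / (b - s) powr p) * indicator {m..\<beta>} s"
    if s: "s \<in> {\<alpha>..\<beta>}" for s
  proof (cases "s \<le> (a + b) / 2")
    case True
    have "w s * ennreal (\<bar>f s\<bar> powr p) \<le> ennreal (\<bar>f s\<bar> powr p / (s - a) powr p)"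
      using True s ab by (intro bound) (auto dest!: gap)
    moreover have "s \<in> {\<alpha>..m}" using True s by (auto simp: m_def)
    ultimately show ?thesis by (auto simp: add_increasing2)
  next
    case False
    have "w s * ennreal (\<bar>f s\<bar> powr p) \<le> ennreal (\<bar>f s\<bar> powr p / (b - s) powr p)"
      using False s ab by (intro bound) (auto dest!: gap)
    moreover have "s \<in> {m..\<beta>}" using False s by (auto simp: m_def)
    ultimately show ?thesis by (auto simp: add_increasing)
  qed
  have "(\<integral>\<^sup>+s. w s * ennreal (\<bar>f s\<bar> powr p) \<partial>lborel)
      = (\<integral>\<^sup>+s. w s * ennreal (\<bar>f s\<bar> powr p) * indicator {\<alpha>..\<beta>} s \<partial>lborel)"
    using S_in supp p by (intro nn_integral_cong) (force split: split_indicator)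
  then have "ennreal (((p - 1) / p) powr p) * (\<integral>\<^sup>+s. w s * ennreal (\<bar>f s\<bar> powr p) \<partial>lborel)
      \<le> (\<integral>\<^sup>+s. ennreal (\<bar>f' s\<bar> powr p) * indicator {\<alpha>..\<beta>} s \<partial>lborel)"
    using hardy_interval[OF p ab(1) m ab(3) f' cont zero split] by simp
  also have "\<dots> \<le> (\<integral>\<^sup>+s. ennreal (\<bar>f' s\<bar> powr p) \<partial>lborel)"
    by (intro nn_integral_mono) (simp add: mult_left_le split: split_indicator)
  finally show ?thesis .
qed

lemma Cc_infty_differentiable: "u \<in> Cc_infty \<Omega> \<Longrightarrow> u differentiable (at x)"
  unfolding Cc_infty_def smooth_fun_def by blast

lemma Cc_infty_continuous: "u \<in> Cc_infty \<Omega> \<Longrightarrow> continuous_on UNIV u"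
  by (intro continuous_at_imp_continuous_on ballI differentiable_imp_continuous_within
      Cc_infty_differentiable)

lemma Cc_infty_continuous_deriv:
  assumes "u \<in> Cc_infty \<Omega>"
  shows "continuous_on UNIV (\<lambda>x. frechet_derivative u (at x) v)"
proof -
  obtain F where "u \<in> F" "\<forall>g\<in>F. (\<forall>x. g differentiable (at x)) \<and>
      (\<forall>v. (\<lambda>x. frechet_derivative g (at x) v) \<in> F)"
    using assms unfolding Cc_infty_def smooth_fun_def by blast
  then have "(\<lambda>x. frechet_derivative u (at x) v) differentiable (at x)" for x by blast
  then show ?thesis
    by (intro continuous_at_imp_continuous_on ballI differentiable_imp_continuous_within)
qed

lemma Cc_infty_support:
  assumes "u \<in> Cc_infty \<Omega>"
  shows "compact (closure {x. u x \<noteq> 0})" "closure {x. u x \<noteq> 0} \<subseteq> \<Omega>"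
  using assms unfolding Cc_infty_def by auto

lemma frechet_derivative_outside_support:
  assumes "u differentiable (at x)" and "x \<notin> closure {x. u x \<noteq> 0}"
  shows "frechet_derivative u (at x) v = 0"
proof -
  have "(u has_derivative frechet_derivative u (at x)) (at x)"
    using assms(1) frechet_derivative_works by blast
  then have "((\<lambda>_. 0) has_derivative frechet_derivative u (at x)) (at x)"
    by (rule has_derivative_transform_within_open[where s="- closure {x. u x \<noteq> 0}"])
       (use assms(2) closure_subset[of "{x. u x \<noteq> 0}"] in auto)
  then have "frechet_derivative u (at x) = (\<lambda>_. 0)"
    using has_derivative_unique has_derivative_const by blast
  then show ?thesis by simp
qed

lemma has_real_derivative_along_line:
  fixes u :: "'a::real_normed_vector \<Rightarrow> real"
  assumes "u differentiable (at (x + s *\<^sub>R v))"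
  shows "((\<lambda>s. u (x + s *\<^sub>R v)) has_real_derivative frechet_derivative u (at (x + s *\<^sub>R v)) v) (at s)"
proof -
  let ?u' = "frechet_derivative u (at (x + s *\<^sub>R v))"
  have "((\<lambda>s. x + s *\<^sub>R v) has_derivative (\<lambda>h. h *\<^sub>R v)) (at s)"
    by (auto intro!: derivative_eq_intros)
  from has_derivative_compose[OF this frechet_derivative_works[THEN iffD1, OF assms]]
  have "((\<lambda>s. u (x + s *\<^sub>R v)) has_derivative (\<lambda>h. ?u' (h *\<^sub>R v))) (at s)" .
  moreover have "(\<lambda>h. ?u' (h *\<^sub>R v)) = (*) (?u' v)"
    using linear_scale[OF linear_frechet_derivative[OF assms]] by (auto simp: fun_eq_iff)
  ultimately show ?thesis by (simp add: has_field_derivative_def)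
qed

lemma Cc_infty_deriv_measurable:
  fixes u :: "'a::euclidean_space \<Rightarrow> real"
  assumes u: "u \<in> Cc_infty \<Omega>" and [measurable]: "F \<in> borel_measurable borel"
  shows "(\<lambda>\<xi>. frechet_derivative u (at \<xi>) (F \<xi>)) \<in> borel_measurable borel"
proof -
  have [measurable]: "(\<lambda>\<xi>. frechet_derivative u (at \<xi>) j) \<in> borel_measurable borel" for j
    by (rule borel_measurable_continuous_onI[OF Cc_infty_continuous_deriv[OF u]])
  have "frechet_derivative u (at \<xi>) (F \<xi>) = (\<Sum>j\<in>Basis. (F \<xi> \<bullet> j) * frechet_derivative u (at \<xi>) j)" for \<xi>
  proof -
    have lin: "linear (frechet_derivative u (at \<xi>))"
      by (rule linear_frechet_derivative[OF Cc_infty_differentiable[OF u]])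
    have "frechet_derivative u (at \<xi>) (F \<xi>) = frechet_derivative u (at \<xi>) (\<Sum>j\<in>Basis. (F \<xi> \<bullet> j) *\<^sub>R j)"
      by (simp add: euclidean_representation)
    then show ?thesis by (simp add: linear_sum[OF lin] linear_scale[OF lin])
  qed
  then show ?thesis by simp
qed

lemma ball_infdist_frontier_subset:
  fixes \<Omega> :: "'a::euclidean_space set"
  assumes "\<xi> \<in> \<Omega>"
  shows "ball \<xi> (infdist \<xi> (frontier \<Omega>)) \<subseteq> \<Omega>"
proof
  fix y assume y: "y \<in> ball \<xi> (infdist \<xi> (frontier \<Omega>))"
  show "y \<in> \<Omega>"
  proof (rule ccontr)
    assume "y \<notin> \<Omega>"
    then obtain z where z: "z \<in> closed_segment \<xi> y" "z \<in> frontier \<Omega>"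
      using connected_Int_frontier[of "closed_segment \<xi> y" \<Omega>] assms by auto
    have "infdist \<xi> (frontier \<Omega>) \<le> dist \<xi> z" by (rule infdist_le[OF z(2)])
    also have "\<dots> \<le> dist \<xi> y" using dist_in_closed_segment[OF z(1)] by (simp add: dist_commute)
    finally show False using y by simp
  qed
qed

lemma norm_diff_projection_lt:
  fixes v w :: "'a::real_inner"
  assumes "0 < w \<bullet> v"
  shows "norm (v - ((w \<bullet> v) / (w \<bullet> w)) *\<^sub>R w) < norm v"
proof -
  define t where "t = (w \<bullet> v) / (w \<bullet> w)"
  have N: "0 < w \<bullet> w" using assms by (cases "w = 0") auto
  have "(v - t *\<^sub>R w) \<bullet> (v - t *\<^sub>R w) = v \<bullet> v - 2 * t * (w \<bullet> v) + t\<^sup>2 * (w \<bullet> w)"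
    by (simp add: inner_diff_left inner_diff_right inner_commute[of v w] algebra_simps power2_eq_square)
  then have "(norm (v - t *\<^sub>R w))\<^sup>2 = v \<bullet> v - 2 * t * (w \<bullet> v) + t\<^sup>2 * (w \<bullet> w)"
    by (simp add: power2_norm_eq_inner)
  also have "\<dots> = v \<bullet> v - (w \<bullet> v)\<^sup>2 / (w \<bullet> w)"
    using N by (simp add: t_def field_simps power2_eq_square)
  also have "\<dots> < v \<bullet> v" using assms N by simp
  finally have "(norm (v - t *\<^sub>R w))\<^sup>2 < (norm v)\<^sup>2" by (simp add: power2_norm_eq_inner)
  then show ?thesis unfolding t_def by (rule power2_less_imp_less) simp
qed

text \<open>Otherwise a point of \<open>\<Omega>\<close> beyond the hyperplane through \<open>\<xi>\<^sub>0\<close> orthogonal to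
  \<open>\<xi>\<^sub>0 - \<xi>\<close>, projected towards \<open>\<xi>\<^sub>0\<close>, yields a point
  \<open>z\<close> closer to \<open>\<xi>\<close> than \<open>\<xi>\<^sub>0\<close> (hence in \<open>\<Omega>\<close>) with \<open>\<xi>\<^sub>0\<close> on the segment between \<open>z\<close> and a point of \<open>\<Omega>\<close>.\<close>
lemma convex_open_nearest_frontier_halfspace:
  fixes \<Omega> :: "'a::euclidean_space set"
  assumes op: "open \<Omega>" and cv: "convex \<Omega>" and \<xi>: "\<xi> \<in> \<Omega>"
    and \<xi>0: "\<xi>0 \<in> frontier \<Omega>" and nearest: "dist \<xi> \<xi>0 = infdist \<xi> (frontier \<Omega>)"
    and \<eta>: "\<eta> \<in> \<Omega>"
  shows "(\<eta> - \<xi>) \<bullet> (\<xi>0 - \<xi>) < (dist \<xi> \<xi>0)\<^sup>2"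
proof (rule ccontr)
  define D where "D = dist \<xi> \<xi>0"
  define \<nu> where "\<nu> = \<xi>0 - \<xi>"
  have \<xi>0_out: "\<xi>0 \<notin> \<Omega>" using \<xi>0 op by (simp add: frontier_def interior_open)
  have D: "D > 0" using \<xi>0_out \<xi> by (auto simp: D_def)
  have \<nu>\<nu>: "\<nu> \<bullet> \<nu> = D\<^sup>2"
    by (simp add: \<nu>_def D_def dist_norm power2_norm_eq_inner[symmetric] norm_minus_commute)
  assume "\<not> (\<eta> - \<xi>) \<bullet> (\<xi>0 - \<xi>) < (dist \<xi> \<xi>0)\<^sup>2"
  then have far: "(\<eta> - \<xi>) \<bullet> \<nu> \<ge> D\<^sup>2" by (simp add: \<nu>_def D_def)
  obtain \<epsilon> where \<epsilon>: "\<epsilon> > 0" "ball \<eta> \<epsilon> \<subseteq> \<Omega>" using op \<eta> open_contains_ball by blast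
  define \<eta>' where "\<eta>' = \<eta> + (\<epsilon> / (2 * D)) *\<^sub>R \<nu>"
  have "norm ((\<epsilon> / (2 * D)) *\<^sub>R \<nu>) = \<epsilon> / 2"
    using D \<epsilon> by (simp add: \<nu>_def D_def dist_norm norm_minus_commute)
  then have \<eta>': "\<eta>' \<in> \<Omega>" using \<epsilon> by (intro subsetD[OF \<epsilon>(2)]) (auto simp: \<eta>'_def dist_norm)
  define w where "w = \<eta>' - \<xi>0"
  have "w = (\<eta> - \<xi>) + (\<epsilon> / (2 * D)) *\<^sub>R \<nu> - \<nu>"
    by (simp add: w_def \<eta>'_def \<nu>_def algebra_simps)
  then have "w \<bullet> \<nu> = (\<eta> - \<xi>) \<bullet> \<nu> + (\<epsilon> / (2 * D)) * D\<^sup>2 - D\<^sup>2"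
    by (simp add: inner_diff_left inner_add_left \<nu>\<nu>)
  moreover have "0 < (\<epsilon> / (2 * D)) * D\<^sup>2" using D \<epsilon> by simp
  ultimately have w\<nu>: "0 < w \<bullet> \<nu>" using far by linarith
  define t where "t = (w \<bullet> \<nu>) / (w \<bullet> w)"
  have t: "t > 0" using w\<nu> by (cases "w = 0") (auto simp: t_def)
  define z where "z = \<xi>0 - t *\<^sub>R w"
  have "z - \<xi> = \<nu> - t *\<^sub>R w" by (simp add: z_def \<nu>_def)
  moreover have "norm \<nu> = D" by (simp add: \<nu>_def D_def dist_norm norm_minus_commute)
  ultimately have "norm (z - \<xi>) < D"
    using norm_diff_projection_lt[OF w\<nu>] by (simp add: t_def)
  then have z: "z \<in> \<Omega>"
    using ball_infdist_frontier_subset[OF \<xi>] nearest by (auto simp: D_def dist_norm norm_minus_commute)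
  have "\<xi>0 = (1 / (1 + t)) *\<^sub>R z + (t / (1 + t)) *\<^sub>R \<eta>'"
  proof -
    have "\<xi>0 = (1 / (1 + t)) *\<^sub>R ((1 + t) *\<^sub>R \<xi>0)" using t by simp
    also have "(1 + t) *\<^sub>R \<xi>0 = z + t *\<^sub>R \<eta>'" by (simp add: z_def w_def algebra_simps)
    finally show ?thesis by (simp add: scaleR_add_right)
  qed
  also have "\<dots> \<in> \<Omega>"
    using t z \<eta>' cv by (intro convexD) (auto simp: field_simps)
  finally show False using \<xi>0_out by simp
qed

lemma convex_line_preimage:
  assumes "convex \<Omega>"
  shows "convex {s::real. x + s *\<^sub>R v \<in> \<Omega>}"
proof (rule convexI)
  fix s1 s2 a b :: real
  assume "s1 \<in> {s. x + s *\<^sub>R v \<in> \<Omega>}" "s2 \<in> {s. x + s *\<^sub>R v \<in> \<Omega>}" "0 \<le> a" "0 \<le> b" "a + b = 1"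
  moreover have "x + (a *\<^sub>R s1 + b *\<^sub>R s2) *\<^sub>R v = a *\<^sub>R (x + s1 *\<^sub>R v) + b *\<^sub>R (x + s2 *\<^sub>R v)"
    using \<open>a + b = 1\<close> by (simp add: algebra_simps flip: scaleR_add_left)
  ultimately show "a *\<^sub>R s1 + b *\<^sub>R s2 \<in> {s. x + s *\<^sub>R v \<in> \<Omega>}"
    using assms by (simp add: convexD)
qed

lemma compact_line_preimage:
  fixes K :: "'a::real_normed_vector set"
  assumes K: "compact K" and v: "v \<noteq> 0"
  shows "compact {s::real. x + s *\<^sub>R v \<in> K}"
proof (rule compact_eq_bounded_closed[THEN iffD2], rule conjI)
  obtain B where B: "\<And>y. y \<in> K \<Longrightarrow> norm y \<le> B"
    using compact_imp_bounded[OF K] by (auto simp: bounded_iff)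
  have "\<bar>s\<bar> \<le> (B + norm x) / norm v" if "x + s *\<^sub>R v \<in> K" for s
  proof -
    have "\<bar>s\<bar> * norm v \<le> norm (x + s *\<^sub>R v) + norm x"
      using norm_triangle_ineq4[of "x + s *\<^sub>R v" x] by simp
    then show ?thesis using B[OF that] v by (simp add: field_simps)
  qed
  then show "bounded {s. x + s *\<^sub>R v \<in> K}" by (auto simp: bounded_iff)
  have "continuous_on UNIV (\<lambda>s. x + s *\<^sub>R v)" by (intro continuous_intros)
  from closed_vimage[OF compact_imp_closed[OF K] this]
  show "closed {s. x + s *\<^sub>R v \<in> K}" by (simp add: vimage_def)
qed

text \<open>\<open>hardy_weight \<Omega> F p \<xi>\<close> is \<open>\<delta>\<^sup>-\<^sup>p\<close>, where \<open>\<delta>\<close> is the distance from \<open>\<xi>\<close> to the complement of \<open>\<Omega>\<close>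
  measured along the line \<open>r \<mapsto> \<xi> + r F(\<xi>)\<close>. Taking the supremum over rational \<open>r\<close> only makes
  measurability evident; the term \<open>r = 0\<close> vanishes because \<open>0 powr -p = 0\<close>.\<close>
definition hardy_weight :: "'a::euclidean_space set \<Rightarrow> ('a \<Rightarrow> 'a) \<Rightarrow> real \<Rightarrow> 'a \<Rightarrow> ennreal" where
  "hardy_weight \<Omega> F p \<xi> = (SUP r\<in>\<rat>. indicator (- \<Omega>) (\<xi> + r *\<^sub>R F \<xi>) * ennreal (\<bar>r\<bar> powr (- p)))"

lemma borel_measurable_hardy_weight:
  assumes "open \<Omega>" and [measurable]: "F \<in> borel_measurable borel"
  shows "hardy_weight \<Omega> F p \<in> borel_measurable borel"
proof -
  have [measurable]: "- \<Omega> \<in> sets borel" using assms(1) by auto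
  show ?thesis unfolding hardy_weight_def
    by (rule borel_measurable_SUP[OF countable_rat]) measurable
qed

lemma hardy_weight_le:
  assumes "\<And>r. \<xi> + r *\<^sub>R F \<xi> \<notin> \<Omega> \<Longrightarrow> t \<le> \<bar>r\<bar>" and "0 < t" and "0 \<le> p"
  shows "hardy_weight \<Omega> F p \<xi> \<le> ennreal (t powr (- p))"
  unfolding hardy_weight_def
proof (rule SUP_least)
  fix r :: real
  show "indicator (- \<Omega>) (\<xi> + r *\<^sub>R F \<xi>) * ennreal (\<bar>r\<bar> powr (- p)) \<le> ennreal (t powr (- p))"
  proof (cases "\<xi> + r *\<^sub>R F \<xi> \<in> \<Omega>")
    case False
    then have "\<bar>r\<bar> powr (- p) \<le> t powr (- p)" using assms by (intro powr_mono2') auto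
    then show ?thesis using False by (simp add: ennreal_leI)
  qed simp
qed

lemma hardy_weight_ge:
  assumes exits: "\<And>r. D \<le> r * (F \<xi> \<bullet> \<nu>) \<Longrightarrow> \<xi> + r *\<^sub>R F \<xi> \<notin> \<Omega>" and D: "0 < D" and p: "0 < p"
  shows "ennreal (\<bar>F \<xi> \<bullet> \<nu>\<bar> powr p / D powr p) \<le> hardy_weight \<Omega> F p \<xi>"
proof (cases "F \<xi> \<bullet> \<nu> = 0")
  case True
  then show ?thesis by simp
next
  case False
  define t0 where "t0 = D / \<bar>F \<xi> \<bullet> \<nu>\<bar>"
  have t0: "0 < t0" using D False by (simp add: t0_def)
  have upper: "ennreal (r powr (- p)) \<le> hardy_weight \<Omega> F p \<xi>" if r: "r \<in> \<rat>" "t0 < r" for r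
  proof -
    define r' where "r' = sgn (F \<xi> \<bullet> \<nu>) * r"
    have "r' \<in> \<rat>" using r(1) by (auto simp: r'_def sgn_if)
    have "r' * (F \<xi> \<bullet> \<nu>) = r * \<bar>F \<xi> \<bullet> \<nu>\<bar>" by (simp add: r'_def abs_sgn mult.commute)
    moreover have "D \<le> r * \<bar>F \<xi> \<bullet> \<nu>\<bar>"
      using r(2) False by (simp add: t0_def divide_less_eq less_imp_le mult.commute)
    ultimately have "D \<le> r' * (F \<xi> \<bullet> \<nu>)" by simp
    then show ?thesis
      unfolding hardy_weight_def using exits t0 r False \<open>r' \<in> \<rat>\<close>
      by (intro SUP_upper2[of r']) (auto simp: r'_def abs_mult)
  qed
  have "ennreal (t0 powr (- p)) \<le> hardy_weight \<Omega> F p \<xi>"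
  proof (rule dense_le)
    fix y assume y: "y < ennreal (t0 powr (- p))"
    have "((\<lambda>r. ennreal (r powr (- p))) \<longlongrightarrow> ennreal (t0 powr (- p))) (at_right t0)"
      using t0 by (intro tendsto_ennrealI tendsto_intros) auto
    from order_tendstoD(1)[OF this y] obtain b where "t0 < b"
      and b: "\<And>r. t0 < r \<Longrightarrow> r < b \<Longrightarrow> y < ennreal (r powr (- p))"
      by (auto simp: eventually_at_right_field)
    obtain r where "r \<in> \<rat>" "t0 < r" "r < b" using Rats_dense_in_real[OF \<open>t0 < b\<close>] by blast
    then show "y \<le> hardy_weight \<Omega> F p \<xi>" using b upper by (meson less_imp_le order_trans)
  qed
  moreover have "\<bar>F \<xi> \<bullet> \<nu>\<bar> powr p / D powr p = t0 powr (- p)"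
    using D False by (simp add: t0_def powr_minus_divide powr_divide)
  ultimately show ?thesis by simp
qed

lemma hardy_weight_ge_normal_component:
  fixes \<Omega> :: "'a::euclidean_space set"
  assumes op: "open \<Omega>" and cv: "convex \<Omega>" and \<xi>: "\<xi> \<in> \<Omega>"
    and \<xi>0: "\<xi>0 \<in> frontier \<Omega>" and nearest: "dist \<xi> \<xi>0 = infdist \<xi> (frontier \<Omega>)" and p: "0 < p"
  shows "ennreal (\<bar>F \<xi> \<bullet> ((\<xi>0 - \<xi>) /\<^sub>R norm (\<xi>0 - \<xi>))\<bar> powr p / infdist \<xi> (frontier \<Omega>) powr p)
           \<le> hardy_weight \<Omega> F p \<xi>"
proof (rule hardy_weight_ge[OF _ _ p])
  define D where "D = infdist \<xi> (frontier \<Omega>)"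
  have "\<xi>0 \<notin> \<Omega>" using \<xi>0 op by (simp add: frontier_def interior_open)
  then have "0 < norm (\<xi>0 - \<xi>)" using \<xi> by auto
  moreover have nD: "norm (\<xi>0 - \<xi>) = D"
    using nearest by (simp add: D_def dist_norm norm_minus_commute)
  ultimately have D: "0 < D" by simp
  then show "0 < infdist \<xi> (frontier \<Omega>)" by (simp add: D_def)
  fix r assume far: "infdist \<xi> (frontier \<Omega>) \<le> r * (F \<xi> \<bullet> ((\<xi>0 - \<xi>) /\<^sub>R norm (\<xi>0 - \<xi>)))"
  show "\<xi> + r *\<^sub>R F \<xi> \<notin> \<Omega>"
  proof
    assume "\<xi> + r *\<^sub>R F \<xi> \<in> \<Omega>"
    from convex_open_nearest_frontier_halfspace[OF op cv \<xi> \<xi>0 nearest this]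
    have "r * (F \<xi> \<bullet> (\<xi>0 - \<xi>)) < D * D"
      using nearest by (simp add: D_def power2_eq_square)
    then have "r * (F \<xi> \<bullet> (\<xi>0 - \<xi>)) / D < D"
      using D by (simp add: pos_divide_less_eq)
    then have "r * (F \<xi> \<bullet> ((\<xi>0 - \<xi>) /\<^sub>R norm (\<xi>0 - \<xi>))) < D"
      using nD by (simp add: divide_inverse mult.commute mult.left_commute)
    then show False using far D_def by linarith
  qed
qed

lemma hardy_along_line:
  fixes \<Omega> :: "'a::euclidean_space set" and F :: "'a \<Rightarrow> 'a"
  assumes op: "open \<Omega>" and cv: "convex \<Omega>" and u: "u \<in> Cc_infty \<Omega>" and p: "p > 1"
    and V: "F x \<noteq> 0" and line: "\<And>s. F (x + s *\<^sub>R F x) = F x"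
  shows "ennreal (((p - 1) / p) powr p)
           * (\<integral>\<^sup>+s. hardy_weight \<Omega> F p (x + s *\<^sub>R F x) * ennreal (\<bar>u (x + s *\<^sub>R F x)\<bar> powr p) \<partial>lborel)
         \<le> (\<integral>\<^sup>+s. ennreal (\<bar>frechet_derivative u (at (x + s *\<^sub>R F x)) (F x)\<bar> powr p) \<partial>lborel)"
proof (rule hardy_line[OF p])
  define K where "K = closure {x. u x \<noteq> 0}"
  have K: "compact K" "K \<subseteq> \<Omega>" using Cc_infty_support[OF u] by (auto simp: K_def)
  have cont_line: "continuous_on UNIV (\<lambda>s. x + s *\<^sub>R F x)" by (intro continuous_intros)
  show "((\<lambda>s. u (x + s *\<^sub>R F x)) has_real_derivative
      frechet_derivative u (at (x + s *\<^sub>R F x)) (F x)) (at s)" for s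
    by (rule has_real_derivative_along_line[OF Cc_infty_differentiable[OF u]])
  show "continuous_on UNIV (\<lambda>s. frechet_derivative u (at (x + s *\<^sub>R F x)) (F x))"
    by (rule continuous_on_compose2[OF Cc_infty_continuous_deriv[OF u] cont_line]) auto
  show "open {s. x + s *\<^sub>R F x \<in> \<Omega>}"
    using open_vimage[OF op cont_line] by (simp add: vimage_def)
  show "convex {s. x + s *\<^sub>R F x \<in> \<Omega>}" by (rule convex_line_preimage[OF cv])
  show "compact {s. x + s *\<^sub>R F x \<in> K}" by (rule compact_line_preimage[OF K(1) V])
  show "{s. x + s *\<^sub>R F x \<in> K} \<subseteq> {s. x + s *\<^sub>R F x \<in> \<Omega>}" using K by auto
  show "u (x + s *\<^sub>R F x) = 0" if "s \<notin> {s. x + s *\<^sub>R F x \<in> K}" for s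
    using that closure_subset[of "{x. u x \<noteq> 0}"] by (auto simp: K_def)
  show "hardy_weight \<Omega> F p (x + s *\<^sub>R F x) \<le> ennreal (t powr (- p))"
    if "0 < t" "\<And>r. s + r \<notin> {s. x + s *\<^sub>R F x \<in> \<Omega>} \<Longrightarrow> t \<le> \<bar>r\<bar>" for s t
  proof (rule hardy_weight_le)
    fix r assume "x + s *\<^sub>R F x + r *\<^sub>R F (x + s *\<^sub>R F x) \<notin> \<Omega>"
    then show "t \<le> \<bar>r\<bar>" using that(2)[of r] by (simp add: line algebra_simps scaleR_add_left)
  qed (use that p in auto)
qed

lemma directional_hardy:
  fixes \<Omega> :: "'a::euclidean_space set" and b c e :: 'a
  assumes op: "open \<Omega>" and cv: "convex \<Omega>" and u: "u \<in> Cc_infty \<Omega>" and p: "p > 1"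
    and bb: "b \<bullet> b = 1" and cc: "c \<bullet> c = 1"
    and bc: "b \<bullet> c = 0" and be: "b \<bullet> e = 0" and ce: "c \<bullet> e = 0"
    and F: "F = (\<lambda>\<xi>. b + (\<alpha> * (\<xi> \<bullet> e)) *\<^sub>R c)"
  shows "ennreal (((p - 1) / p) powr p) * (\<integral>\<^sup>+\<xi>. hardy_weight \<Omega> F p \<xi> * ennreal (\<bar>u \<xi>\<bar> powr p) \<partial>lborel)
      \<le> (\<integral>\<^sup>+\<xi>. ennreal (\<bar>frechet_derivative u (at \<xi>) (F \<xi>)\<bar> powr p) \<partial>lborel)"
proof -
  define c0 where "c0 = ennreal (((p - 1) / p) powr p)"
  define lhs where "lhs \<xi> = c0 * (hardy_weight \<Omega> F p \<xi> * ennreal (\<bar>u \<xi>\<bar> powr p))" for \<xi>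
  define rhs where "rhs \<xi> = ennreal (\<bar>frechet_derivative u (at \<xi>) (F \<xi>)\<bar> powr p)" for \<xi>
  have [measurable]: "F \<in> borel_measurable borel" unfolding F by measurable
  have [measurable]: "u \<in> borel_measurable borel"
    by (rule borel_measurable_continuous_onI[OF Cc_infty_continuous[OF u]])
  have [measurable]: "hardy_weight \<Omega> F p \<in> borel_measurable borel"
    by (rule borel_measurable_hardy_weight[OF op]) measurable
  have [measurable]: "(\<lambda>\<xi>. frechet_derivative u (at \<xi>) (F \<xi>)) \<in> borel_measurable borel"
    by (rule Cc_infty_deriv_measurable[OF u]) measurable
  have [measurable]: "lhs \<in> borel_measurable borel" "rhs \<in> borel_measurable borel"
    unfolding lhs_def rhs_def by measurable
  have on_line: "(\<integral>\<^sup>+s. lhs (x + s *\<^sub>R F x) \<partial>lborel) \<le> (\<integral>\<^sup>+s. rhs (x + s *\<^sub>R F x) \<partial>lborel)" for x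
  proof -
    have "F x \<bullet> b = 1" unfolding F by (simp add: inner_add_left bb inner_commute[of c b] bc)
    then have "F x \<noteq> 0" by auto
    have line: "F (x + s *\<^sub>R F x) = F x" for s
      unfolding F by (simp add: inner_add_left ce inner_commute[of e b] be)
    have "(\<integral>\<^sup>+s. lhs (x + s *\<^sub>R F x) \<partial>lborel)
        = c0 * (\<integral>\<^sup>+s. hardy_weight \<Omega> F p (x + s *\<^sub>R F x) * ennreal (\<bar>u (x + s *\<^sub>R F x)\<bar> powr p) \<partial>lborel)"
      unfolding lhs_def by (rule nn_integral_cmult) measurable
    also have "\<dots> \<le> (\<integral>\<^sup>+s. ennreal (\<bar>frechet_derivative u (at (x + s *\<^sub>R F x)) (F x)\<bar> powr p) \<partial>lborel)"
      unfolding c0_def by (rule hardy_along_line[OF op cv u p \<open>F x \<noteq> 0\<close> line])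
    also have "\<dots> = (\<integral>\<^sup>+s. rhs (x + s *\<^sub>R F x) \<partial>lborel)"
      unfolding rhs_def by (simp add: line)
    finally show ?thesis .
  qed
  have "c0 * (\<integral>\<^sup>+\<xi>. hardy_weight \<Omega> F p \<xi> * ennreal (\<bar>u \<xi>\<bar> powr p) \<partial>lborel) = (\<integral>\<^sup>+\<xi>. lhs \<xi> \<partial>lborel)"
    unfolding lhs_def by (rule nn_integral_cmult[symmetric]) measurable
  also have "\<dots> = (\<integral>\<^sup>+x. indicator (slab b) x * (\<integral>\<^sup>+s. lhs (x + s *\<^sub>R F x) \<partial>lborel) \<partial>lborel)"
    unfolding F by (rule nn_integral_lborel_sheared_lines[OF _ bb cc bc be ce]) measurable
  also have "\<dots> \<le> (\<integral>\<^sup>+x. indicator (slab b) x * (\<integral>\<^sup>+s. rhs (x + s *\<^sub>R F x) \<partial>lborel) \<partial>lborel)"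
    by (intro nn_integral_mono mult_left_mono on_line) auto
  also have "\<dots> = (\<integral>\<^sup>+\<xi>. rhs \<xi> \<partial>lborel)"
    unfolding F by (rule nn_integral_lborel_sheared_lines[symmetric, OF _ bb cc bc be ce]) measurable
  finally show ?thesis unfolding c0_def rhs_def .
qed

lemma powr_add_le_powr:
  fixes x y q :: real
  assumes q: "q \<ge> 1" and x: "x \<ge> 0" and y: "y \<ge> 0"
  shows "x powr q + y powr q \<le> (x + y) powr q"
proof (cases "x + y = 0")
  case True
  then have "x = 0" "y = 0" using x y by auto
  then show ?thesis using q by simp
next
  case False
  then have xy: "x + y > 0" using x y by simp
  have "z powr q \<le> z * (x + y) powr (q - 1)" if "0 \<le> z" "z \<le> x + y" for z
  proof -
    have "z powr q = z * z powr (q - 1)" using powr_add[of z 1 "q - 1"] that by (cases "z = 0") auto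
    also have "\<dots> \<le> z * (x + y) powr (q - 1)" using that q by (intro mult_left_mono powr_mono2) auto
    finally show ?thesis .
  qed
  then have "x powr q + y powr q \<le> x * (x + y) powr (q - 1) + y * (x + y) powr (q - 1)"
    using x y by (intro add_mono) auto
  also have "\<dots> = (x + y) * (x + y) powr (q - 1)" by (simp add: distrib_right)
  also have "\<dots> = (x + y) powr q" using powr_add[of "x + y" 1 "q - 1"] xy by simp
  finally show ?thesis .
qed

lemma sum_powr_le_powr_sum:
  fixes f :: "'i \<Rightarrow> real"
  assumes "finite I" and "\<And>i. i \<in> I \<Longrightarrow> 0 \<le> f i" and "q \<ge> 1"
  shows "(\<Sum>i\<in>I. f i powr q) \<le> (\<Sum>i\<in>I. f i) powr q"
  using assms
proof (induction I rule: finite_induct)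
  case (insert a I)
  then have "(\<Sum>i\<in>insert a I. f i powr q) \<le> f a powr q + (\<Sum>i\<in>I. f i) powr q" by simp
  also have "\<dots> \<le> (\<Sum>i\<in>insert a I. f i) powr q"
    using insert by (simp add: powr_add_le_powr sum_nonneg)
  finally show ?case .
qed simp

lemma sum_abs_powr_le_sqrt_sum_squares_powr:
  fixes A B :: "'i::finite \<Rightarrow> real"
  assumes p: "p \<ge> 2"
  shows "(\<Sum>i\<in>UNIV. \<bar>A i\<bar> powr p + \<bar>B i\<bar> powr p) \<le> sqrt (\<Sum>i\<in>UNIV. (A i)\<^sup>2 + (B i)\<^sup>2) powr p"
proof -
  have q: "p / 2 \<ge> 1" using p by simp
  have "\<bar>a\<bar> powr p = (a\<^sup>2) powr (p / 2)" for a :: real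
  proof (cases "a = 0")
    case False
    then have sq: "a\<^sup>2 = \<bar>a\<bar> powr 2" by (subst powr_numeral) auto
    show ?thesis unfolding sq powr_powr by simp
  qed (use p in simp)
  then have "(\<Sum>i\<in>UNIV. \<bar>A i\<bar> powr p + \<bar>B i\<bar> powr p)
      = (\<Sum>i\<in>UNIV. (A i)\<^sup>2 powr (p / 2) + (B i)\<^sup>2 powr (p / 2))" by simp
  also have "\<dots> \<le> (\<Sum>i\<in>UNIV. ((A i)\<^sup>2 + (B i)\<^sup>2) powr (p / 2))"
    by (intro sum_mono powr_add_le_powr q) auto
  also have "\<dots> \<le> (\<Sum>i\<in>UNIV. (A i)\<^sup>2 + (B i)\<^sup>2) powr (p / 2)"
    by (intro sum_powr_le_powr_sum q) auto
  also have "\<dots> = sqrt (\<Sum>i\<in>UNIV. (A i)\<^sup>2 + (B i)\<^sup>2) powr p"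
    by (simp add: powr_half_sqrt[symmetric] powr_powr sum_nonneg)
  finally show ?thesis .
qed

definition heis_ex :: "'n::finite \<Rightarrow> 'n hpoint" where "heis_ex i = (axis i 1, 0, 0)"
definition heis_ey :: "'n::finite \<Rightarrow> 'n hpoint" where "heis_ey i = (0, axis i 1, 0)"
definition heis_et :: "'n::finite hpoint" where "heis_et = (0, 0, 1)"

lemma heis_basis_inner:
  "heis_ex i \<bullet> heis_ex i = 1" "heis_ey i \<bullet> heis_ey i = 1" "heis_et \<bullet> heis_et = 1"
  "heis_ex i \<bullet> heis_et = 0" "heis_ey i \<bullet> heis_et = 0" "heis_et \<bullet> heis_ex i = 0" "heis_et \<bullet> heis_ey i = 0"
  "heis_ex i \<bullet> heis_ey i = 0" "heis_ey i \<bullet> heis_ex i = 0"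
  by (simp_all add: heis_ex_def heis_ey_def heis_et_def inner_prod_def inner_axis_axis)

lemma hX_shear: "hX i = (\<lambda>\<xi>. heis_ex i + (2 * (\<xi> \<bullet> heis_ey i)) *\<^sub>R heis_et)"
  by (auto simp: fun_eq_iff hX_def heis_ex_def heis_ey_def heis_et_def inner_prod_def inner_axis)

lemma hY_shear: "hY i = (\<lambda>\<xi>. heis_ey i + (- 2 * (\<xi> \<bullet> heis_ex i)) *\<^sub>R heis_et)"
  by (auto simp: fun_eq_iff hY_def heis_ex_def heis_ey_def heis_et_def inner_prod_def inner_axis)

lemma horizontal_hardy:
  fixes \<Omega> :: "'n::finite hpoint set"
  assumes op: "open \<Omega>" and cv: "convex \<Omega>" and u: "u \<in> Cc_infty \<Omega>" and p: "p > 1"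
  shows "ennreal (((p - 1) / p) powr p) * (\<integral>\<^sup>+\<xi>. (\<Sum>i\<in>UNIV. hardy_weight \<Omega> (hX i) p \<xi>
             + hardy_weight \<Omega> (hY i) p \<xi>) * ennreal (\<bar>u \<xi>\<bar> powr p) \<partial>lborel)
         \<le> (\<integral>\<^sup>+\<xi>. ennreal (\<Sum>i\<in>UNIV. \<bar>frechet_derivative u (at \<xi>) (hX i \<xi>)\<bar> powr p
             + \<bar>frechet_derivative u (at \<xi>) (hY i \<xi>)\<bar> powr p) \<partial>lborel)"
proof -
  define c0 where "c0 = ennreal (((p - 1) / p) powr p)"
  define WX where "WX i \<xi> = hardy_weight \<Omega> (hX i) p \<xi> * ennreal (\<bar>u \<xi>\<bar> powr p)" for i \<xi>
  define WY where "WY i \<xi> = hardy_weight \<Omega> (hY i) p \<xi> * ennreal (\<bar>u \<xi>\<bar> powr p)" for i \<xi>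
  define DX where "DX i \<xi> = ennreal (\<bar>frechet_derivative u (at \<xi>) (hX i \<xi>)\<bar> powr p)" for i \<xi>
  define DY where "DY i \<xi> = ennreal (\<bar>frechet_derivative u (at \<xi>) (hY i \<xi>)\<bar> powr p)" for i \<xi>
  have [measurable]: "hX i \<in> borel_measurable borel" "hY i \<in> borel_measurable borel" for i
    unfolding hX_shear hY_shear by measurable
  have [measurable]: "u \<in> borel_measurable borel"
    by (rule borel_measurable_continuous_onI[OF Cc_infty_continuous[OF u]])
  have [measurable]: "hardy_weight \<Omega> (hX i) p \<in> borel_measurable borel"
    "hardy_weight \<Omega> (hY i) p \<in> borel_measurable borel" for i
    by (rule borel_measurable_hardy_weight[OF op], measurable)+
  have [measurable]: "(\<lambda>\<xi>. frechet_derivative u (at \<xi>) (hX i \<xi>)) \<in> borel_measurable borel"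
    "(\<lambda>\<xi>. frechet_derivative u (at \<xi>) (hY i \<xi>)) \<in> borel_measurable borel" for i
    by (rule Cc_infty_deriv_measurable[OF u], measurable)+
  have [measurable]: "WX i \<in> borel_measurable borel" "WY i \<in> borel_measurable borel"
    "DX i \<in> borel_measurable borel" "DY i \<in> borel_measurable borel" for i
    unfolding WX_def WY_def DX_def DY_def by measurable
  have "(\<integral>\<^sup>+\<xi>. (\<Sum>i\<in>UNIV. hardy_weight \<Omega> (hX i) p \<xi> + hardy_weight \<Omega> (hY i) p \<xi>)
      * ennreal (\<bar>u \<xi>\<bar> powr p) \<partial>lborel) = (\<integral>\<^sup>+\<xi>. (\<Sum>i\<in>UNIV. WX i \<xi> + WY i \<xi>) \<partial>lborel)"
    by (simp add: WX_def WY_def sum_distrib_right distrib_right)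
  also have "\<dots> = (\<Sum>i\<in>UNIV. (\<integral>\<^sup>+\<xi>. WX i \<xi> \<partial>lborel) + (\<integral>\<^sup>+\<xi>. WY i \<xi> \<partial>lborel))"
    by (subst nn_integral_sum) (auto intro!: sum.cong nn_integral_add)
  finally have "c0 * (\<integral>\<^sup>+\<xi>. (\<Sum>i\<in>UNIV. hardy_weight \<Omega> (hX i) p \<xi> + hardy_weight \<Omega> (hY i) p \<xi>)
      * ennreal (\<bar>u \<xi>\<bar> powr p) \<partial>lborel)
      = (\<Sum>i\<in>UNIV. c0 * (\<integral>\<^sup>+\<xi>. WX i \<xi> \<partial>lborel) + c0 * (\<integral>\<^sup>+\<xi>. WY i \<xi> \<partial>lborel))"
    by (simp add: sum_distrib_left distrib_left)
  also have "\<dots> \<le> (\<Sum>i\<in>UNIV. (\<integral>\<^sup>+\<xi>. DX i \<xi> \<partial>lborel) + (\<integral>\<^sup>+\<xi>. DY i \<xi> \<partial>lborel))"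
  proof (intro sum_mono add_mono)
    fix i
    show "c0 * (\<integral>\<^sup>+\<xi>. WX i \<xi> \<partial>lborel) \<le> (\<integral>\<^sup>+\<xi>. DX i \<xi> \<partial>lborel)"
      unfolding c0_def WX_def DX_def
      by (rule directional_hardy[OF op cv u p heis_basis_inner(1,3,4,8,7) hX_shear])
    show "c0 * (\<integral>\<^sup>+\<xi>. WY i \<xi> \<partial>lborel) \<le> (\<integral>\<^sup>+\<xi>. DY i \<xi> \<partial>lborel)"
      unfolding c0_def WY_def DY_def
      by (rule directional_hardy[OF op cv u p heis_basis_inner(2,3,5,9,6) hY_shear])
  qed
  also have "\<dots> = (\<integral>\<^sup>+\<xi>. (\<Sum>i\<in>UNIV. DX i \<xi> + DY i \<xi>) \<partial>lborel)"
    by (subst nn_integral_sum) (auto intro!: sum.cong nn_integral_add[symmetric])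
  also have "\<dots> = (\<integral>\<^sup>+\<xi>. ennreal (\<Sum>i\<in>UNIV. \<bar>frechet_derivative u (at \<xi>) (hX i \<xi>)\<bar> powr p
      + \<bar>frechet_derivative u (at \<xi>) (hY i \<xi>)\<bar> powr p) \<partial>lborel)"
    by (intro nn_integral_cong) (simp add: DX_def DY_def sum.distrib sum_nonneg)
  finally show ?thesis unfolding c0_def .
qed

lemma horizontal_derivatives_le_hgrad_norm:
  assumes u: "u \<in> Cc_infty \<Omega>" and p: "p \<ge> 2"
  shows "ennreal (\<Sum>i\<in>UNIV. \<bar>frechet_derivative u (at \<xi>) (hX i \<xi>)\<bar> powr p
           + \<bar>frechet_derivative u (at \<xi>) (hY i \<xi>)\<bar> powr p)
         \<le> indicator \<Omega> \<xi> * ennreal ((hgrad_norm u \<xi>) powr p)"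
proof (cases "\<xi> \<in> \<Omega>")
  case True
  then show ?thesis unfolding hgrad_norm_def
    by (simp add: ennreal_leI sum_abs_powr_le_sqrt_sum_squares_powr[OF p])
next
  case False
  then have "\<xi> \<notin> closure {x. u x \<noteq> 0}" using Cc_infty_support(2)[OF u] by auto
  then show ?thesis using p
    by (simp add: frechet_derivative_outside_support[OF Cc_infty_differentiable[OF u]] False)
qed

lemma boundary_term_le_hardy_weights:
  fixes \<Omega> :: "'n::finite hpoint set"
  assumes op: "open \<Omega>" and cv: "convex \<Omega>"
    and nearest: "\<xi> \<in> \<Omega> \<Longrightarrow> proj \<xi> \<in> frontier \<Omega> \<and> dist \<xi> (proj \<xi>) = infdist \<xi> (frontier \<Omega>)"
    and p: "0 < p"
  shows "indicator \<Omega> \<xi> * ennreal ((let \<nu> = (proj \<xi> - \<xi>) /\<^sub>R norm (proj \<xi> - \<xi>) in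
                 (\<Sum>i\<in>UNIV. \<bar>hX i \<xi> \<bullet> \<nu>\<bar> powr p + \<bar>hY i \<xi> \<bullet> \<nu>\<bar> powr p))
               / (infdist \<xi> (frontier \<Omega>)) powr p * \<bar>u \<xi>\<bar> powr p)
         \<le> (\<Sum>i\<in>UNIV. hardy_weight \<Omega> (hX i) p \<xi> + hardy_weight \<Omega> (hY i) p \<xi>) * ennreal (\<bar>u \<xi>\<bar> powr p)"
proof (cases "\<xi> \<in> \<Omega>")
  case \<xi>: True
  define \<nu> where "\<nu> = (proj \<xi> - \<xi>) /\<^sub>R norm (proj \<xi> - \<xi>)"
  define D where "D = infdist \<xi> (frontier \<Omega>) powr p"
  have weight: "ennreal (\<bar>F \<xi> \<bullet> \<nu>\<bar> powr p / D) \<le> hardy_weight \<Omega> F p \<xi>" for F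
    unfolding \<nu>_def D_def using nearest[OF \<xi>]
    by (intro hardy_weight_ge_normal_component[OF op cv \<xi> _ _ p]) auto
  have "(\<Sum>i\<in>UNIV. \<bar>hX i \<xi> \<bullet> \<nu>\<bar> powr p + \<bar>hY i \<xi> \<bullet> \<nu>\<bar> powr p) / D
      = (\<Sum>i\<in>UNIV. \<bar>hX i \<xi> \<bullet> \<nu>\<bar> powr p / D + \<bar>hY i \<xi> \<bullet> \<nu>\<bar> powr p / D)"
    by (simp add: sum_divide_distrib add_divide_distrib)
  then have "ennreal ((\<Sum>i\<in>UNIV. \<bar>hX i \<xi> \<bullet> \<nu>\<bar> powr p + \<bar>hY i \<xi> \<bullet> \<nu>\<bar> powr p) / D)
      = (\<Sum>i\<in>UNIV. ennreal (\<bar>hX i \<xi> \<bullet> \<nu>\<bar> powr p / D) + ennreal (\<bar>hY i \<xi> \<bullet> \<nu>\<bar> powr p / D))"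
    by (simp add: D_def sum_ennreal[symmetric] ennreal_plus[symmetric] del: ennreal_plus sum_ennreal)
  also have "\<dots> \<le> (\<Sum>i\<in>UNIV. hardy_weight \<Omega> (hX i) p \<xi> + hardy_weight \<Omega> (hY i) p \<xi>)"
    by (intro sum_mono add_mono weight)
  finally have "ennreal ((\<Sum>i\<in>UNIV. \<bar>hX i \<xi> \<bullet> \<nu>\<bar> powr p + \<bar>hY i \<xi> \<bullet> \<nu>\<bar> powr p) / D)
      * ennreal (\<bar>u \<xi>\<bar> powr p)
      \<le> (\<Sum>i\<in>UNIV. hardy_weight \<Omega> (hX i) p \<xi> + hardy_weight \<Omega> (hY i) p \<xi>) * ennreal (\<bar>u \<xi>\<bar> powr p)"
    by (rule mult_right_mono) simp
  then show ?thesis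
    by (simp only: \<xi> indicator_simps(1) mult_1 Let_def \<nu>_def[symmetric] D_def[symmetric]
        ennreal_mult''[OF powr_ge_zero])
qed simp

theorem theorem3p2:
  fixes \<Omega> :: "'n::finite hpoint set"
    and proj :: "'n hpoint \<Rightarrow> 'n hpoint"
    and p :: real
    and u :: "'n hpoint \<Rightarrow> real"
  assumes "open \<Omega>" and "convex \<Omega>" and "\<Omega> \<noteq> {}" and "\<Omega> \<noteq> UNIV"
    and "\<And>\<xi>. \<xi> \<in> \<Omega> \<Longrightarrow> proj \<xi> \<in> frontier \<Omega> \<and> dist \<xi> (proj \<xi>) = infdist \<xi> (frontier \<Omega>)"
    and "p \<ge> 2"
    and "u \<in> Cc_infty \<Omega>"
  shows "(\<integral>\<^sup>+ \<xi>. indicator \<Omega> \<xi> * ennreal ((hgrad_norm u \<xi>) powr p) \<partial>lebesgue)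
         \<ge> ennreal (((p - 1) / p) powr p) *
           (\<integral>\<^sup>+ \<xi>. indicator \<Omega> \<xi> * ennreal (
               (let \<nu> = (proj \<xi> - \<xi>) /\<^sub>R norm (proj \<xi> - \<xi>) in
                 (\<Sum>i\<in>UNIV. \<bar>hX i \<xi> \<bullet> \<nu>\<bar> powr p + \<bar>hY i \<xi> \<bullet> \<nu>\<bar> powr p))
               / (infdist \<xi> (frontier \<Omega>)) powr p * \<bar>u \<xi>\<bar> powr p) \<partial>lebesgue)"
  (is "?grad \<ge> ?c * ?boundary")
proof -
  note op = assms(1) and cv = assms(2) and proj = assms(5) and p2 = assms(6) and u = assms(7)
  have p: "p > 1" and p0: "p > 0" using p2 by simp_all
  have "?boundary \<le> (\<integral>\<^sup>+\<xi>. (\<Sum>i\<in>UNIV. hardy_weight \<Omega> (hX i) p \<xi> + hardy_weight \<Omega> (hY i) p \<xi>)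
      * ennreal (\<bar>u \<xi>\<bar> powr p) \<partial>lborel)" (is "_ \<le> ?weighted")
    unfolding nn_integral_completion
    by (intro nn_integral_mono boundary_term_le_hardy_weights[OF op cv proj p0])
  then have "?c * ?boundary \<le> ?c * ?weighted" by (rule mult_left_mono) simp
  also have "\<dots> \<le> (\<integral>\<^sup>+\<xi>. ennreal (\<Sum>i\<in>UNIV. \<bar>frechet_derivative u (at \<xi>) (hX i \<xi>)\<bar> powr p
      + \<bar>frechet_derivative u (at \<xi>) (hY i \<xi>)\<bar> powr p) \<partial>lborel)"
    by (rule horizontal_hardy[OF op cv u p])
  also have "\<dots> \<le> ?grad"
    unfolding nn_integral_completion
    by (intro nn_integral_mono horizontal_derivatives_le_hgrad_norm[OF u p2])
  finally show ?thesis .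
qed

end
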